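(* Let $n$ and $k\ge2$ be integers with $20k<n$. Let $\mathbf{d}\in\mathbb{Z}_{\ge0}^n$ be a sequence with $\sum_{v\in[n]}d_v=nd\equiv0\pmod k$ (so $d$ is the average of $\mathbf{d}$), and let $\Delta(\mathbf{d})=\max_v d_v$. (i) If $\Delta(\mathbf{d})\le\left(1+\frac{1}{3k}\right)d\le\frac14\binom{n-1}{k-1}$ and $d\ge1$, then $\mathbf{d}$ is $k$-graphical. (ii) If $k\,\Delta(\mathbf{d})^{1+1/(k-1)}\le\frac12 dn$, then $\mathbf{d}$ is $k$-graphical.
   Context: A sequence $\mathbf{d}\in\mathbb{Z}^n$ is $k$-graphical if there exists a $k$-uniform hypergraph (a set of $k$-element subsets, no repeated edges) on vertex set $[n]$ whose degree sequence is $\mathbf{d}$, i.e. vertex $v$ lies in exactly $d_v$ edges. *)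

theory Defs
  imports Complex_Main
begin

text \<open>A sequence d (indexed by the vertex set [n] = {1..n}) is k-graphical if there is a
  k-uniform hypergraph H (a set of k-element subsets of [n], hence no repeated edges)
  such that every vertex v lies in exactly d v edges.\<close>
definition k_graphical :: "nat \<Rightarrow> nat \<Rightarrow> (nat \<Rightarrow> nat) \<Rightarrow> bool" where
  "k_graphical k n d \<longleftrightarrow>
     (\<exists>H. H \<subseteq> {e. e \<subseteq> {1..n} \<and> card e = k} \<and>
          (\<forall>v\<in>{1..n}. card {e\<in>H. v \<in> e} = d v))"

definition max_deg :: "nat \<Rightarrow> (nat \<Rightarrow> nat) \<Rightarrow> nat" where
  "max_deg n d = Max (d ` {1..n})"

definition avg_deg :: "nat \<Rightarrow> (nat \<Rightarrow> nat) \<Rightarrow> real" where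
  "avg_deg n d = real (\<Sum>v\<in>{1..n}. d v) / real n"

end

theory Submission
  imports Defs
begin

text \<open>Let \<open>S\<close> be the degree sum, \<open>\<Delta>\<close> the maximum degree and \<open>q = \<lfloor>S/\<Delta>\<rfloor>\<close>. If
  \<open>S \<le> k \<cdot> C(q, k)\<close>, the \<open>S/k\<close> edges can be placed as an almost regular \<open>k\<close>-graph (one
  minimising the sum of squared degrees) on \<open>q\<close> vertices of largest demand, and every degree
  there is then at least \<open>\<Delta>\<close>. Replacing an edge \<open>e \<ni> x\<close> by \<open>e - {x} \<union> {y}\<close> moves one unit
  of degree from \<open>x\<close> to \<open>y\<close> and is possible whenever \<open>y\<close> has smaller degree than \<open>x\<close>;
  repeating this from vertices above their demand to vertices below it reaches the degree
  sequence exactly. Both (i) and (ii) ensure \<open>2\<Delta> \<le> C(q - 1, k - 1)\<close>, which gives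
  \<open>S < (q + 1)\<Delta> \<le> 2q\<Delta> \<le> q \<cdot> C(q - 1, k - 1) = k \<cdot> C(q, k)\<close>: under (i), \<open>q\<close> is so close
  to \<open>n\<close> that Bernoulli's inequality bounds \<open>C(n - 1, k - 1) / C(q - 1, k - 1)\<close> by 2; under
  (ii), \<open>C(q - 1, k - 1) \<ge> ((q - 1)/(k - 1))\<^bsup>k - 1\<^esup> \<ge> (2 \<Delta>\<^bsup>1/(k - 1)\<^esup>)\<^bsup>k - 1\<^esup>\<close>.\<close>

definition k_subsets :: "nat \<Rightarrow> 'a set \<Rightarrow> 'a set set" where
  "k_subsets k V = {e. e \<subseteq> V \<and> card e = k}"

definition degree :: "'a set set \<Rightarrow> 'a \<Rightarrow> nat" where
  "degree H v = card {e\<in>H. v \<in> e}"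

lemma finite_k_subsets: "finite V \<Longrightarrow> finite (k_subsets k V)"
  unfolding k_subsets_def by (rule finite_subset[of _ "Pow V"]) auto

lemma card_k_subsets: "finite V \<Longrightarrow> card (k_subsets k V) = card V choose k"
  unfolding k_subsets_def by (rule n_subsets)

lemma k_subsets_mono: "V \<subseteq> W \<Longrightarrow> k_subsets k V \<subseteq> k_subsets k W"
  unfolding k_subsets_def by blast

lemma degree_outside: "H \<subseteq> k_subsets k V \<Longrightarrow> v \<notin> V \<Longrightarrow> degree H v = 0"
  unfolding degree_def k_subsets_def by (auto simp: card_eq_0_iff)

lemma sum_degree:
  assumes "finite V" "H \<subseteq> k_subsets k V"
  shows "(\<Sum>v\<in>V. degree H v) = k * card H"
proof -
  have "finite H" using assms finite_k_subsets finite_subset by blast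
  then have "(\<Sum>v\<in>V. degree H v) = (\<Sum>v\<in>V. \<Sum>e\<in>H. if v \<in> e then 1 else 0)"
    unfolding degree_def by (simp add: sum.If_cases Int_def conj_commute)
  also have "\<dots> = (\<Sum>e\<in>H. card (V \<inter> e))"
    using assms(1) by (subst sum.swap) (simp add: sum.If_cases)
  also have "\<dots> = (\<Sum>e\<in>H. k)"
    using assms(2) by (intro sum.cong) (auto simp: k_subsets_def Int_absorb1)
  finally show ?thesis by simp
qed

lemma exists_shiftable_edge:
  assumes "finite H" "degree H y < degree H x"
  shows "\<exists>g\<in>H. x \<in> g \<and> y \<notin> g \<and> insert y (g - {x}) \<notin> H"
proof (rule ccontr)
  assume no_edge: "\<not> ?thesis"
  define A where "A = {g\<in>H. x \<in> g \<and> y \<notin> g}"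
  define B where "B = {g\<in>H. y \<in> g \<and> x \<notin> g}"
  define C where "C = {g\<in>H. x \<in> g \<and> y \<in> g}"
  have "x \<noteq> y" using assms by auto
  have fin: "finite A" "finite B" "finite C" unfolding A_def B_def C_def using assms by auto
  have "{e\<in>H. x \<in> e} = A \<union> C" "{e\<in>H. y \<in> e} = B \<union> C" "A \<inter> C = {}" "B \<inter> C = {}"
    unfolding A_def B_def C_def by auto
  then have "degree H x = card A + card C" "degree H y = card B + card C"
    unfolding degree_def using fin by (simp_all add: card_Un_disjoint)
  moreover have "card A \<le> card B"
  proof (rule card_inj_on_le)
    show "inj_on (\<lambda>g. insert y (g - {x})) A"
      by (rule inj_on_inverseI[where g = "\<lambda>e. insert x (e - {y})"]) (auto simp: A_def)
    show "(\<lambda>g. insert y (g - {x})) ` A \<subseteq> B"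
      using no_edge \<open>x \<noteq> y\<close> unfolding A_def B_def by auto
  qed (use fin in simp)
  ultimately show False using assms(2) by simp
qed

lemma degree_replace_edge:
  assumes "finite H" "g \<in> H" "e \<notin> H"
  shows "degree (insert e (H - {g})) v + (if v \<in> g then 1 else 0)
       = degree H v + (if v \<in> e then 1 else 0)"
proof -
  let ?S = "{f\<in>H. v \<in> f}"
  have fin: "finite ?S" using assms by auto
  have "card (?S - {g}) + (if v \<in> g then 1 else 0) = card ?S"
  proof (cases "v \<in> g")
    case True
    then have "g \<in> ?S" using assms(2) by simp
    then show ?thesis using True card.remove[OF fin \<open>g \<in> ?S\<close>] by simp
  qed simp
  moreover have "{f\<in>insert e (H - {g}). v \<in> f} = (if v \<in> e then insert e (?S - {g}) else ?S - {g})"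
    using assms by auto
  moreover have "e \<notin> ?S - {g}" using assms by auto
  ultimately show ?thesis unfolding degree_def using fin by auto
qed

lemma shift_edge:
  assumes "finite V" "H \<subseteq> k_subsets k V" "y \<in> V" "degree H y < degree H x"
  obtains H' where "H' \<subseteq> k_subsets k V" "card H' = card H"
    "\<And>v. degree H' v = (if v = x then degree H x - 1 else if v = y then degree H y + 1
                        else degree H v)"
proof -
  have fin: "finite H" using assms finite_k_subsets finite_subset by blast
  obtain g where g: "g \<in> H" "x \<in> g" "y \<notin> g" "insert y (g - {x}) \<notin> H"
    using exists_shiftable_edge[OF fin assms(4)] by blast
  define e where "e = insert y (g - {x})"
  have "g \<subseteq> V" "card g = k" using g assms(2) unfolding k_subsets_def by auto
  moreover have "finite g" using \<open>g \<subseteq> V\<close> assms(1) finite_subset by blast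
  moreover have "card e = card g"
    using \<open>finite g\<close> card.remove[OF \<open>finite g\<close> g(2)] g unfolding e_def by simp
  ultimately have "e \<in> k_subsets k V"
    using g assms(3) unfolding e_def k_subsets_def by auto
  then have "insert e (H - {g}) \<subseteq> k_subsets k V" using assms(2) by auto
  moreover have "card (insert e (H - {g})) = card H"
    using fin g card.remove[OF fin g(1)] unfolding e_def by simp
  moreover have "degree (insert e (H - {g})) v
      = (if v = x then degree H x - 1 else if v = y then degree H y + 1 else degree H v)" for v
    using degree_replace_edge[OF fin g(1), of e v] g unfolding e_def by auto
  ultimately show thesis using that by blast
qed

lemma exists_almost_regular:
  assumes "finite V" "m \<le> card V choose k"
  obtains H where "H \<subseteq> k_subsets k V" "card H = m"
    "\<And>v w. v \<in> V \<Longrightarrow> w \<in> V \<Longrightarrow> degree H w \<le> degree H v + 1"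
proof -
  let ?P = "\<lambda>H. H \<subseteq> k_subsets k V \<and> card H = m"
  let ?sq = "\<lambda>H. \<Sum>v\<in>V. (degree H v)\<^sup>2"
  obtain H0 where "?P H0"
    using obtain_subset_with_card_n[of m "k_subsets k V"] assms card_k_subsets by metis
  then obtain H where H: "?P H" and min: "\<And>H'. ?P H' \<Longrightarrow> ?sq H \<le> ?sq H'"
    using ex_has_least_nat[of ?P H0 ?sq] by blast
  have "degree H w \<le> degree H v + 1" if "v \<in> V" "w \<in> V" for v w
  proof (rule ccontr)
    assume gap: "\<not> degree H w \<le> degree H v + 1"
    then have less: "degree H v < degree H w" and "v \<noteq> w" by auto
    obtain H' where H': "H' \<subseteq> k_subsets k V" "card H' = card H"
      and deg: "\<And>u. degree H' u = (if u = w then degree H w - 1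
                     else if u = v then degree H v + 1 else degree H u)"
      using shift_edge[OF assms(1) _ \<open>v \<in> V\<close> less] H by blast
    have split: "?sq G = (degree G w)\<^sup>2 + (degree G v)\<^sup>2 + (\<Sum>u\<in>V - {v, w}. (degree G u)\<^sup>2)"
      for G :: "'a set set"
      using sum.subset_diff[of "{v, w}" V "\<lambda>u. (degree G u)\<^sup>2"] that assms(1) \<open>v \<noteq> w\<close>
      by (simp add: ac_simps)
    have "(degree H w - 1)\<^sup>2 + (degree H v + 1)\<^sup>2 < (degree H w)\<^sup>2 + (degree H v)\<^sup>2"
      using gap by (cases "degree H w") (auto simp: power2_eq_square)
    then have "?sq H' < ?sq H"
      using split[of H] split[of H'] deg \<open>v \<noteq> w\<close> by simp
    then show False using min[of H'] H H' by simp
  qed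
  then show thesis using that H by blast
qed

lemma sum_surplus_eq_sum_deficit:
  fixes f g :: "'a \<Rightarrow> nat"
  assumes "finite V" "Q \<subseteq> V" "sum f V = sum g V"
    and "\<forall>v\<in>Q. g v \<le> f v" "\<forall>v\<in>V - Q. f v \<le> g v"
  shows "(\<Sum>v\<in>Q. f v - g v) = (\<Sum>v\<in>V - Q. g v - f v)"
proof -
  have "sum f Q = sum g Q + (\<Sum>v\<in>Q. f v - g v)"
    "sum g (V - Q) = sum f (V - Q) + (\<Sum>v\<in>V - Q. g v - f v)"
    using assms(4,5) by (simp_all add: sum.distrib[symmetric])
  moreover have split: "sum h V = sum h (V - Q) + sum h Q" for h :: "'a \<Rightarrow> nat"
    using sum.subset_diff[OF assms(2,1)] .
  ultimately show ?thesis using split[of f] split[of g] assms(3) by linarith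
qed

lemma exists_hypergraph_with_degrees:
  fixes d :: "'a \<Rightarrow> nat"
  assumes "finite V" "Q \<subseteq> V" and top: "\<And>x y. x \<in> Q \<Longrightarrow> y \<in> V - Q \<Longrightarrow> d y \<le> d x"
    and "H0 \<subseteq> k_subsets k V" "(\<Sum>v\<in>V. d v) = k * card H0"
    and "\<forall>v\<in>Q. d v \<le> degree H0 v" "\<forall>v\<in>V - Q. degree H0 v \<le> d v"
  obtains H where "H \<subseteq> k_subsets k V" "\<And>v. v \<in> V \<Longrightarrow> degree H v = d v"
proof -
  let ?P = "\<lambda>H. H \<subseteq> k_subsets k V \<and> card H = card H0
                 \<and> (\<forall>v\<in>Q. d v \<le> degree H v) \<and> (\<forall>v\<in>V - Q. degree H v \<le> d v)"
  let ?surplus = "\<lambda>H. \<Sum>v\<in>Q. degree H v - d v"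
  obtain H where H: "?P H" and min: "\<And>H'. ?P H' \<Longrightarrow> ?surplus H \<le> ?surplus H'"
    using ex_has_least_nat[of ?P H0 ?surplus] assms by blast
  have "(\<Sum>v\<in>V. degree H v) = (\<Sum>v\<in>V. d v)"
    using sum_degree[OF assms(1), of H k] H assms(5) by simp
  then have balance: "?surplus H = (\<Sum>v\<in>V - Q. d v - degree H v)"
    using sum_surplus_eq_sum_deficit[OF assms(1,2)] H by blast
  have fin: "finite Q" "finite (V - Q)" using assms(1,2) finite_subset by auto
  have "?surplus H = 0"
  proof (rule ccontr)
    assume surplus: "?surplus H \<noteq> 0"
    then obtain x where x: "x \<in> Q" "d x < degree H x"
      using fin by auto
    obtain y where y: "y \<in> V - Q" "degree H y < d y"
      using surplus balance fin by auto
    have "degree H y < degree H x" using x y top[OF x(1) y(1)] by linarith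
    then obtain H' where H': "H' \<subseteq> k_subsets k V" "card H' = card H"
      and deg: "\<And>v. degree H' v = (if v = x then degree H x - 1
                     else if v = y then degree H y + 1 else degree H v)"
      using shift_edge[OF assms(1)] H y by blast
    have "x \<noteq> y" using x y by auto
    then have "?P H'" using H H' deg x y by auto
    moreover have "?surplus H' < ?surplus H"
    proof (rule sum_strict_mono_ex1[OF fin(1)])
      show "\<forall>v\<in>Q. degree H' v - d v \<le> degree H v - d v" using deg y by (simp add: diff_le_mono2)
      show "\<exists>v\<in>Q. degree H' v - d v < degree H v - d v" using x deg by (intro bexI[of _ x]) auto
    qed
    ultimately show False using min[of H'] by simp
  qed
  then have "\<forall>v\<in>Q. degree H v \<le> d v" "\<forall>v\<in>V - Q. d v \<le> degree H v"
    using balance fin by auto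
  then have "\<forall>v\<in>V. degree H v = d v" using H by (meson DiffI antisym)
  then show thesis using that H by blast
qed

lemma exists_top_subset:
  fixes d :: "'a \<Rightarrow> 'b::linorder"
  assumes "finite V" "q \<le> card V"
  shows "\<exists>Q\<subseteq>V. card Q = q \<and> (\<forall>x\<in>Q. \<forall>y\<in>V - Q. d y \<le> d x)"
  using assms(2)
proof (induction q)
  case (Suc q)
  then obtain Q where Q: "Q \<subseteq> V" "card Q = q" "\<forall>x\<in>Q. \<forall>y\<in>V - Q. d y \<le> d x" by auto
  have "finite Q" using Q(1) assms(1) finite_subset by blast
  have "V - Q \<noteq> {}"
  proof
    assume "V - Q = {}"
    then have "card V \<le> q" using card_mono[OF \<open>finite Q\<close>] Q(2) by simp
    then show False using Suc.prems by simp
  qed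
  then have "Max (d ` (V - Q)) \<in> d ` (V - Q)" using assms(1) by (intro Max_in) auto
  then obtain z where z: "z \<in> V - Q" "d z = Max (d ` (V - Q))" by auto
  then have "\<forall>y\<in>V - Q. d y \<le> d z" using assms(1) by simp
  then have "\<forall>x\<in>insert z Q. \<forall>y\<in>V - insert z Q. d y \<le> d x" using Q(3) by blast
  moreover have "card (insert z Q) = Suc q" using z Q(2) \<open>finite Q\<close> by simp
  moreover have "insert z Q \<subseteq> V" using z Q(1) by blast
  ultimately show ?case by blast
qed (intro exI[of _ "{}"], simp)

lemma exists_hypergraph_with_degrees_if_core:
  fixes d :: "'a \<Rightarrow> nat"
  assumes "finite V" "k \<ge> 1" "k dvd (\<Sum>v\<in>V. d v)" "q \<le> card V" "\<forall>v\<in>V. d v \<le> D"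
    and "q * D \<le> (\<Sum>v\<in>V. d v)" "(\<Sum>v\<in>V. d v) \<le> k * (q choose k)"
  obtains H where "H \<subseteq> k_subsets k V" "\<And>v. v \<in> V \<Longrightarrow> degree H v = d v"
proof -
  obtain Q where Q: "Q \<subseteq> V" "card Q = q" "\<forall>x\<in>Q. \<forall>y\<in>V - Q. d y \<le> d x"
    using exists_top_subset[OF assms(1,4)] by blast
  have "finite Q" using Q(1) assms(1) finite_subset by blast
  obtain m where m: "(\<Sum>v\<in>V. d v) = k * m" using assms(3) by blast
  then have "m \<le> card Q choose k" using assms(2,7) Q(2) by simp
  then obtain H0 where H0: "H0 \<subseteq> k_subsets k Q" "card H0 = m"
    and almost_regular: "\<And>v w. v \<in> Q \<Longrightarrow> w \<in> Q \<Longrightarrow> degree H0 w \<le> degree H0 v + 1"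
    using exists_almost_regular[OF \<open>finite Q\<close>] by blast
  have "D \<le> degree H0 v" if "v \<in> Q" for v
  proof (rule ccontr)
    assume "\<not> D \<le> degree H0 v"
    then have "degree H0 v < D" by simp
    then have "\<forall>w\<in>Q. degree H0 w \<le> D"
      using almost_regular[OF that] by (metis Suc_eq_plus1 Suc_leI le_trans)
    then have "(\<Sum>w\<in>Q. degree H0 w) < (\<Sum>w\<in>Q. D)"
      using that \<open>degree H0 v < D\<close> \<open>finite Q\<close> by (intro sum_strict_mono_ex1) auto
    then show False
      using sum_degree[OF \<open>finite Q\<close> H0(1)] H0(2) Q(2) m assms(6) by simp
  qed
  then have inQ: "\<forall>v\<in>Q. d v \<le> degree H0 v" using assms(5) Q(1) le_trans by blast
  have outQ: "\<forall>v\<in>V - Q. degree H0 v \<le> d v" using degree_outside[OF H0(1)] by simp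
  have "H0 \<subseteq> k_subsets k V" using H0(1) k_subsets_mono[OF Q(1)] by blast
  moreover have "(\<Sum>v\<in>V. d v) = k * card H0" using m H0(2) by simp
  ultimately show thesis
    using exists_hypergraph_with_degrees[OF assms(1) Q(1) _ _ _ inQ outQ] Q(3) that by blast
qed

lemma binomial_pred_lower_bound:
  "real (N choose r) * (1 - real r / real N) \<le> real ((N - 1) choose r)"
proof (cases "r \<le> N")
  case True
  have "real (N - r) * real (N choose r) = real N * real ((N - 1) choose r)"
    using binomial_absorb_comp[of N r] by (metis of_nat_mult)
  then show ?thesis using True by (cases "N = 0") (simp_all add: of_nat_diff field_simps)
qed (simp add: binomial_eq_0)

lemma binomial_shift_lower_bound:
  assumes "r \<le> q"
  shows "real ((q + j - 1) choose r) * (1 - real r / real q) ^ j \<le> real ((q - 1) choose r)"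
proof (induction j)
  case (Suc j)
  let ?x = "1 - real r / real q"
  have "0 \<le> ?x" using assms by (cases "q = 0") auto
  have "real r / real (q + j) \<le> real r / real q"
    using assms by (cases "q = 0") (auto intro: divide_left_mono)
  then have "real ((q + j) choose r) * ?x \<le> real ((q + j) choose r) * (1 - real r / real (q + j))"
    by (intro mult_left_mono) auto
  also have "\<dots> \<le> real ((q + j - 1) choose r)"
    by (rule binomial_pred_lower_bound)
  finally have "real ((q + j) choose r) * ?x * ?x ^ j \<le> real ((q + j - 1) choose r) * ?x ^ j"
    using \<open>0 \<le> ?x\<close> by (intro mult_right_mono) auto
  then show ?case using Suc.IH by (simp add: mult.assoc)
qed simp

lemma binomial_shift_le_double:
  assumes "2 * j * r \<le> q"
  shows "(q + j - 1) choose r \<le> 2 * ((q - 1) choose r)"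
proof (cases "j = 0")
  case False
  let ?x = "1 - real r / real q"
  have "1 * r \<le> (2 * j) * r" using False by (intro mult_le_mono1) simp
  then have "r \<le> q" using assms by linarith
  have "real j * real r / real q \<le> 1 / 2"
    using of_nat_mono[OF assms, where 'a = real] by (cases "q = 0") (auto simp: field_simps)
  then have "1 / 2 \<le> 1 + real j * (- (real r / real q))" by simp
  also have "\<dots> \<le> (1 + (- (real r / real q))) ^ j"
    using \<open>r \<le> q\<close> by (intro Bernoulli_inequality) (cases "q = 0", auto)
  finally have "real ((q + j - 1) choose r) * (1 / 2) \<le> real ((q + j - 1) choose r) * ?x ^ j"
    by (intro mult_left_mono) auto
  also have "\<dots> \<le> real ((q - 1) choose r)"
    by (rule binomial_shift_lower_bound[OF \<open>r \<le> q\<close>])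
  finally show ?thesis by linarith
qed simp

lemma twice_le_binomial_div_if_near_regular:
  fixes k n D S :: nat
  assumes k: "k \<ge> 2" and n: "20 * k < n" and "S \<le> n * D"
    and near_regular: "real D \<le> (1 + 1 / (3 * real k)) * (real S / real n)"
    and small: "(1 + 1 / (3 * real k)) * (real S / real n) \<le> 1 / 4 * real ((n - 1) choose (k - 1))"
    and avg: "1 \<le> real S / real n"
  shows "2 * D \<le> (S div D - 1) choose (k - 1)"
proof -
  define q where "q = S div D"
  have "n \<le> S" using avg n by (simp add: field_simps)
  then have "D > 0" using \<open>S \<le> n * D\<close> n by (cases D) auto
  have "real (3 * k * n * D) \<le> real ((3 * k + 1) * S)"
    using near_regular k n by (simp add: field_simps)
  then have "3 * k * n * D \<le> (3 * k + 1) * S" by (simp only: of_nat_le_iff)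
  also have "\<dots> < (3 * k + 1) * ((q + 1) * D)"
    using dividend_less_div_times[OF \<open>D > 0\<close>, of S] unfolding q_def
    by (intro mult_strict_left_mono) (simp_all add: algebra_simps)
  finally have "3 * k * n * D < (3 * k + 1) * (q + 1) * D" by (simp only: mult.assoc)
  then have "3 * k * n < (3 * k + 1) * (q + 1)" by (rule mult_right_less_imp_less) simp
  have "q * D \<le> n * D" using \<open>S \<le> n * D\<close> unfolding q_def by (meson div_times_less_eq_dividend le_trans)
  then obtain j where "n = q + j" using \<open>D > 0\<close> by (metis le_add_diff_inverse mult_le_cancel2)
  have "2 * j * (k - 1) \<le> q"
  proof -
    have "3 * (k * j) \<le> q + 3 * k"
      using \<open>3 * k * n < (3 * k + 1) * (q + 1)\<close> \<open>n = q + j\<close> by (simp add: algebra_simps)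
    moreover have "2 * j \<le> k * j" using k by simp
    moreover have "j * (k - 1) + j = k * j" using k by (cases k) (auto simp: algebra_simps)
    ultimately show ?thesis using n \<open>n = q + j\<close> by linarith
  qed
  then have "(n - 1) choose (k - 1) \<le> 2 * ((q - 1) choose (k - 1))"
    using binomial_shift_le_double[of j "k - 1" q] \<open>n = q + j\<close> by (simp add: mult.assoc)
  moreover have "4 * D \<le> (n - 1) choose (k - 1)" using near_regular small by linarith
  ultimately show ?thesis unfolding q_def by simp
qed

lemma power_le_binomial:
  fixes y :: real
  assumes "1 \<le> y" "real r * y \<le> real m"
  shows "y ^ r \<le> real (m choose r)"
proof (cases "r = 0")
  case False
  have "real r \<le> real m" using assms mult_left_mono[OF assms(1), of "real r"] by simp
  have "y ^ r \<le> (real m / real r) ^ r"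
    using assms False by (intro power_mono) (auto simp: field_simps)
  also have "\<dots> \<le> real (m choose r)"
    using binomial_ge_n_over_k_pow_k \<open>real r \<le> real m\<close> by simp
  finally show ?thesis .
qed simp

lemma twice_le_binomial_div_if_sparse:
  fixes k D S :: nat
  assumes k: "k \<ge> 2"
    and sparse: "real k * real D powr (1 + 1 / (real k - 1)) \<le> real S / 2"
  shows "2 * D \<le> (S div D - 1) choose (k - 1)"
proof (cases "D = 0")
  case False
  then have "D \<ge> 1" by simp
  define q where "q = S div D"
  define x where "x = real D powr (1 / (real k - 1))"
  have k1: "real (k - 1) = real k - 1" "real k - 1 > 0" using k by (auto simp: of_nat_diff)
  have "x \<ge> 1" unfolding x_def using \<open>D \<ge> 1\<close> k1 by (intro ge_one_powr_ge_zero) auto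
  have "x ^ (k - 1) = real D"
    using \<open>D \<ge> 1\<close> k1 unfolding x_def by (simp add: powr_realpow[symmetric] powr_powr)
  have "S < (q + 1) * D"
    using dividend_less_div_times[of D S] \<open>D \<ge> 1\<close> unfolding q_def by (simp add: algebra_simps)
  then have "real S < (real q + 1) * real D"
    by (metis of_nat_1 of_nat_add of_nat_less_iff of_nat_mult)
  moreover have "2 * real k * x * real D \<le> real S"
    using sparse \<open>D \<ge> 1\<close> unfolding x_def by (simp add: powr_add algebra_simps)
  ultimately have "(2 * real k * x) * real D < (real q + 1) * real D" by linarith
  then have "2 * real k * x < real q + 1" using \<open>D \<ge> 1\<close> by simp
  moreover have "real k \<le> real k * x" using mult_left_mono[OF \<open>x \<ge> 1\<close>, of "real k"] by simp
  ultimately have "q \<ge> 1" using k by linarith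
  have "real (k - 1) * (2 * x) \<le> real (q - 1)"
    using \<open>2 * real k * x < real q + 1\<close> \<open>x \<ge> 1\<close> \<open>q \<ge> 1\<close> k1(1)
    by (simp add: of_nat_diff algebra_simps)
  then have "(2 * x) ^ (k - 1) \<le> real ((q - 1) choose (k - 1))"
    using \<open>x \<ge> 1\<close> by (intro power_le_binomial) auto
  moreover have "(2::real) \<le> 2 ^ (k - 1)" using power_increasing[of 1 "k - 1" "2::real"] k by simp
  then have "2 * real D \<le> (2 * x) ^ (k - 1)"
    using \<open>x ^ (k - 1) = real D\<close> by (simp add: power_mult_distrib mult_right_mono)
  ultimately show ?thesis unfolding q_def by linarith
qed simp

lemma le_max_deg: "v \<in> {1..n} \<Longrightarrow> d v \<le> max_deg n d"
  unfolding max_deg_def by simp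

lemma sum_le_mult_max_deg: "(\<Sum>v\<in>{1..n}. d v) \<le> n * max_deg n d"
  using sum_bounded_above[of "{1..n}" d "max_deg n d"] le_max_deg by simp

lemma exists_core_size_if_twice_le_binomial:
  fixes k n D S :: nat
  assumes "k \<ge> 1" "S \<le> n * D" "2 * D \<le> (S div D - 1) choose (k - 1)"
  shows "\<exists>q\<le>n. q * D \<le> S \<and> S \<le> k * (q choose k)"
proof (cases "D = 0")
  case True
  then show ?thesis using assms(2) by (intro exI[of _ 0]) simp
next
  case False
  define q where "q = S div D"
  have "q \<noteq> 0"
  proof
    assume "q = 0"
    then have "(q - 1) choose (k - 1) \<le> 1" by (cases "k - 1") simp_all
    then show False using assms(3) False unfolding q_def by simp
  qed
  have "q * D \<le> S" unfolding q_def by simp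
  then have "q * D \<le> n * D" using assms(2) by (rule le_trans)
  then have "q \<le> n" using False by simp
  have "S < D + q * D" unfolding q_def using dividend_less_div_times False by simp
  also have "\<dots> \<le> q * (2 * D)" using \<open>q \<noteq> 0\<close> by simp
  also have "\<dots> \<le> q * ((q - 1) choose (k - 1))" using assms(3) unfolding q_def by simp
  also have "\<dots> = k * (q choose k)" using times_binomial_minus1_eq assms(1) by simp
  finally have "S \<le> k * (q choose k)" by simp
  with \<open>q \<le> n\<close> \<open>q * D \<le> S\<close> show ?thesis by blast
qed

lemma k_graphical_if_twice_max_deg_le_binomial:
  assumes "k \<ge> 1" "k dvd (\<Sum>v\<in>{1..n}. d v)"
    and "2 * max_deg n d \<le> ((\<Sum>v\<in>{1..n}. d v) div max_deg n d - 1) choose (k - 1)"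
  shows "k_graphical k n d"
proof -
  obtain q where "q \<le> n" "q * max_deg n d \<le> (\<Sum>v\<in>{1..n}. d v)"
    "(\<Sum>v\<in>{1..n}. d v) \<le> k * (q choose k)"
    using exists_core_size_if_twice_le_binomial[OF assms(1) sum_le_mult_max_deg assms(3)] by blast
  then obtain H where "H \<subseteq> k_subsets k {1..n}" "\<And>v. v \<in> {1..n} \<Longrightarrow> degree H v = d v"
    using exists_hypergraph_with_degrees_if_core[of "{1..n}" k d q "max_deg n d"] assms(1,2)
      le_max_deg by auto
  then show ?thesis unfolding k_graphical_def degree_def k_subsets_def by blast
qed

theorem proposition2p2:
  fixes n k :: nat and d :: "nat \<Rightarrow> nat"
  assumes "k \<ge> 2" and "20 * k < n"
    and "(\<Sum>v\<in>{1..n}. d v) mod k = 0"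
  shows "(real (max_deg n d) \<le> (1 + 1 / (3 * real k)) * avg_deg n d
            \<and> (1 + 1 / (3 * real k)) * avg_deg n d \<le> (1/4) * real ((n - 1) choose (k - 1))
            \<and> avg_deg n d \<ge> 1
          \<longrightarrow> k_graphical k n d)
       \<and> (real k * real (max_deg n d) powr (1 + 1 / (real k - 1)) \<le> (1/2) * avg_deg n d * real n
          \<longrightarrow> k_graphical k n d)"
proof -
  define S D where "S = (\<Sum>v\<in>{1..n}. d v)" and "D = max_deg n d"
  have "n > 0" using assms(2) by simp
  have avg: "avg_deg n d = real S / real n" unfolding avg_deg_def S_def ..
  have graphical: "2 * D \<le> (S div D - 1) choose (k - 1) \<Longrightarrow> k_graphical k n d"
    using k_graphical_if_twice_max_deg_le_binomial[where n = n and d = d] assms(1,3)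
    unfolding S_def D_def by (simp add: dvd_eq_mod_eq_0)
  show ?thesis
    using graphical avg \<open>n > 0\<close>
      twice_le_binomial_div_if_near_regular[OF assms(1,2)
        sum_le_mult_max_deg[where n = n and d = d, folded S_def D_def]]
      twice_le_binomial_div_if_sparse[OF assms(1), of D S]
    unfolding D_def by auto
qed

end
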